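(* Let $C\subseteq\mathbb{F}_2^n$ be a code, $x\in C$ and $y\in\mathbb{F}_2^n$. Then $D_C(y)=x$ provided that one of the following holds: (1) $\delta(y,x)<\frac{\delta(C)+(\omega^{\mathrm{H}}(y)-\omega^{\mathrm{H}}(x))(\gamma-1)}{2}$, or (2) $\delta(y,x)<\frac{\hat\delta(C)+\omega^{\mathrm{H}}(y)(\gamma-1)}{2}$.
   Context: Let $n\ge2$ and fix reals $0<p\le q<1/2$. Let $\mathbb{P}^n(y\mid x)=\prod_{i=1}^n\mathbb{P}(y_i\mid x_i)$ where $\mathbb{P}(1\mid0)=p$, $\mathbb{P}(0\mid0)=1-p$, $\mathbb{P}(0\mid1)=q$, $\mathbb{P}(1\mid1)=1-q$. Let $\gamma:=\log_{q/(1-p)}\left(\frac{p}{1-q}\right)$. For $x\in\mathbb{F}_2^n$, $\omega^{\mathrm{H}}(x)=|\{i:x_i=1\}|$; for $a,b\in\{0,1\}$, $d_{ab}(y,x)=|\{i: y_i=a,\ x_i=b\}|$. Discrepancy: $\delta(y,x):=\gamma\,d_{10}(y,x)+d_{01}(y,x)$; symmetric discrepancy: $\hat\delta(y,x):=\delta(y,x)-\omega^{\mathrm{H}}(y)(\gamma-1)$. A code is a subset $C\subseteq\mathbb{F}_2^n$ with $|C|\ge2$; its minimum discrepancy is $\delta(C)=\min\{\delta(x,x'):x,x'\in C,\ x\ne x'\}$ and its minimum symmetric discrepancy is $\hat\delta(C)=\min\{\hat\delta(x,x'):x,x'\in C,\ x\ne x'\}$. The maximum likelihood decoder $D_C:\mathbb{F}_2^n\to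 C\cup\{\mathbf f\}$ sends $y$ to $x$ if $x$ is the unique codeword maximizing $\mathbb{P}^n(y\mid x)$, and to a failure symbol $\mathbf f\notin\mathbb{F}_2^n$ otherwise. *)

theory Defs
  imports Complex_Main
begin

text \<open>Binary words of length n: functions nat => bool that are False outside {0..<n}
  (True = 1, False = 0).\<close>
definition words :: "nat \<Rightarrow> (nat \<Rightarrow> bool) set" where
  "words n = {x. \<forall>i\<ge>n. \<not> x i}"

definition hw :: "nat \<Rightarrow> (nat \<Rightarrow> bool) \<Rightarrow> nat" where
  "hw n x = card {i. i < n \<and> x i}"

definition dab :: "nat \<Rightarrow> bool \<Rightarrow> bool \<Rightarrow> (nat \<Rightarrow> bool) \<Rightarrow> (nat \<Rightarrow> bool) \<Rightarrow> nat" where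
  "dab n a b y x = card {i. i < n \<and> y i = a \<and> x i = b}"

definition gam :: "real \<Rightarrow> real \<Rightarrow> real" where
  "gam p q = log (q / (1 - p)) (p / (1 - q))"

definition discr :: "real \<Rightarrow> real \<Rightarrow> nat \<Rightarrow> (nat \<Rightarrow> bool) \<Rightarrow> (nat \<Rightarrow> bool) \<Rightarrow> real" where
  "discr p q n y x = gam p q * real (dab n True False y x) + real (dab n False True y x)"

definition sdiscr :: "real \<Rightarrow> real \<Rightarrow> nat \<Rightarrow> (nat \<Rightarrow> bool) \<Rightarrow> (nat \<Rightarrow> bool) \<Rightarrow> real" where
  "sdiscr p q n y x = discr p q n y x - real (hw n y) * (gam p q - 1)"

definition is_code :: "nat \<Rightarrow> (nat \<Rightarrow> bool) set \<Rightarrow> bool" where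
  "is_code n C \<longleftrightarrow> C \<subseteq> words n \<and> card C \<ge> 2"

definition min_discr :: "real \<Rightarrow> real \<Rightarrow> nat \<Rightarrow> (nat \<Rightarrow> bool) set \<Rightarrow> real" where
  "min_discr p q n C = Min {discr p q n x x' | x x'. x \<in> C \<and> x' \<in> C \<and> x \<noteq> x'}"

definition min_sdiscr :: "real \<Rightarrow> real \<Rightarrow> nat \<Rightarrow> (nat \<Rightarrow> bool) set \<Rightarrow> real" where
  "min_sdiscr p q n C = Min {sdiscr p q n x x' | x x'. x \<in> C \<and> x' \<in> C \<and> x \<noteq> x'}"

definition chan1 :: "real \<Rightarrow> real \<Rightarrow> bool \<Rightarrow> bool \<Rightarrow> real" where
  "chan1 p q yb xb = (if xb then (if yb then 1 - q else q) else (if yb then p else 1 - p))"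

definition chan :: "real \<Rightarrow> real \<Rightarrow> nat \<Rightarrow> (nat \<Rightarrow> bool) \<Rightarrow> (nat \<Rightarrow> bool) \<Rightarrow> real" where
  "chan p q n y x = (\<Prod>i<n. chan1 p q (y i) (x i))"

text \<open>ML decoder; None plays the role of the failure symbol f.\<close>
definition ml_decode :: "real \<Rightarrow> real \<Rightarrow> nat \<Rightarrow> (nat \<Rightarrow> bool) set \<Rightarrow> (nat \<Rightarrow> bool) \<Rightarrow> (nat \<Rightarrow> bool) option" where
  "ml_decode p q n C y =
     (if \<exists>!x. x \<in> C \<and> (\<forall>x'\<in>C. chan p q n y x' \<le> chan p q n y x)
      then Some (THE x. x \<in> C \<and> (\<forall>x'\<in>C. chan p q n y x' \<le> chan p q n y x))
      else None)"

end

theory Submission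
  imports Defs
begin

text \<open>With \<open>b = q/(1-p) < 1\<close> and \<open>b\<^sup>\<gamma> = p/(1-q)\<close>, every letter satisfies
  \<open>P(y\<^sub>i | x\<^sub>i) = K(y\<^sub>i) b\<^bsup>\<delta>(y\<^sub>i,x\<^sub>i)\<^esup>\<close>, so \<open>P\<^sup>n(y | x) = K(y) b\<^bsup>\<delta>(y,x)\<^esup>\<close> and the maximum
  likelihood decoder returns the unique codeword of least discrepancy from \<open>y\<close>.
  Since \<open>\<gamma> \<ge> 0\<close>, the discrepancy satisfies the triangle inequality, and swapping its
  arguments changes it by \<open>(\<omega>(y) - \<omega>(x))(\<gamma> - 1)\<close>; the symmetric discrepancy is symmetric
  and satisfies a triangle inequality up to \<open>\<omega>(y)(\<gamma> - 1)\<close>. Exactly as for the Hamming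
  distance, either bound then forces \<open>\<delta>(y,x) < \<delta>(y,x')\<close> for every other codeword \<open>x'\<close>.\<close>

definition letter_discr :: "real \<Rightarrow> bool \<Rightarrow> bool \<Rightarrow> real" where
  "letter_discr g yb xb = (if yb \<and> \<not> xb then g else if \<not> yb \<and> xb then 1 else 0)"

lemma real_card_less_eq_sum_of_bool:
  "real (card {i. i < (n::nat) \<and> P i}) = (\<Sum>i<n. of_bool (P i))"
proof -
  have "{i. i < n \<and> P i} = {..<n} \<inter> {i. P i}" by auto
  then show ?thesis using sum_of_bool_eq[of "{..<n}" P] by simp
qed

lemma discr_eq_sum: "discr p q n y x = (\<Sum>i<n. letter_discr (gam p q) (y i) (x i))"
proof -
  have "discr p q n y x
      = (\<Sum>i<n. gam p q * of_bool (y i \<and> \<not> x i) + of_bool (\<not> y i \<and> x i))"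
    unfolding discr_def dab_def real_card_less_eq_sum_of_bool sum_distrib_left sum.distrib
    by simp
  also have "\<dots> = (\<Sum>i<n. letter_discr (gam p q) (y i) (x i))"
    by (rule sum.cong) (auto simp: letter_discr_def)
  finally show ?thesis .
qed

lemma hw_eq_sum: "real (hw n y) = (\<Sum>i<n. of_bool (y i))"
  unfolding hw_def real_card_less_eq_sum_of_bool ..

lemma sdiscr_eq_sum:
  "sdiscr p q n y x = (\<Sum>i<n. letter_discr (gam p q) (y i) (x i) - of_bool (y i) * (gam p q - 1))"
  unfolding sdiscr_def discr_eq_sum hw_eq_sum sum_distrib_right sum_subtractf ..

lemma discr_triangle:
  assumes "gam p q \<ge> 0"
  shows "discr p q n x z \<le> discr p q n x y + discr p q n y z"
  unfolding discr_eq_sum sum.distrib[symmetric]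
  by (rule sum_mono) (use assms in \<open>auto simp: letter_discr_def\<close>)

lemma sdiscr_triangle:
  assumes "gam p q \<ge> 0"
  shows "sdiscr p q n x z \<le> sdiscr p q n x y + sdiscr p q n y z + real (hw n y) * (gam p q - 1)"
  unfolding sdiscr_eq_sum hw_eq_sum sum_distrib_right sum.distrib[symmetric]
  by (rule sum_mono) (use assms in \<open>auto simp: letter_discr_def\<close>)

lemma discr_commute:
  "discr p q n x y = discr p q n y x - (real (hw n y) - real (hw n x)) * (gam p q - 1)"
proof -
  have "discr p q n x y = (\<Sum>i<n. letter_discr (gam p q) (y i) (x i)
          - (of_bool (y i) - of_bool (x i)) * (gam p q - 1))"
    unfolding discr_eq_sum by (rule sum.cong) (auto simp: letter_discr_def)
  then show ?thesis
    unfolding discr_eq_sum hw_eq_sum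
    by (simp add: sum_subtractf sum_distrib_right left_diff_distrib)
qed

lemma sdiscr_commute: "sdiscr p q n x y = sdiscr p q n y x"
  unfolding sdiscr_def using discr_commute[of p q n x y] by (simp add: algebra_simps)

lemma gam_pos:
  assumes "0 < p" "p \<le> q" "q < 1/2"
  shows "gam p q > 0"
proof -
  have "ln (p / (1 - q)) < 0" "ln (q / (1 - p)) < 0" using assms by auto
  then show ?thesis unfolding gam_def log_def by (simp add: divide_neg_neg)
qed

lemma chan1_eq_powr:
  assumes "0 < p" "p \<le> q" "q < 1/2"
  shows "chan1 p q yb xb = (if yb then 1 - q else 1 - p) * (q / (1 - p)) powr letter_discr (gam p q) yb xb"
proof -
  have "(q / (1 - p)) powr gam p q = p / (1 - q)"
    unfolding gam_def by (rule powr_log_cancel) (use assms in auto)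
  then show ?thesis using assms by (auto simp: chan1_def letter_discr_def)
qed

lemma chan_eq_powr_discr:
  assumes "0 < p" "p \<le> q" "q < 1/2"
  shows "chan p q n y x = (\<Prod>i<n. if y i then 1 - q else 1 - p) * (q / (1 - p)) powr discr p q n y x"
proof -
  have "q / (1 - p) \<noteq> 0" using assms by simp
  show ?thesis
    unfolding chan_def discr_eq_sum powr_sum[OF \<open>q / (1 - p) \<noteq> 0\<close>] chan1_eq_powr[OF assms]
      prod.distrib ..
qed

lemma chan_less_of_discr_less:
  assumes "0 < p" "p \<le> q" "q < 1/2" and "discr p q n y x < discr p q n y x'"
  shows "chan p q n y x' < chan p q n y x"
proof -
  have "(\<Prod>i<n. if y i then 1 - q else 1 - p) > 0"
    using assms(1-3) by (intro prod_pos) auto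
  moreover have "(q / (1 - p)) powr discr p q n y x' < (q / (1 - p)) powr discr p q n y x"
    using assms by (intro powr_less_mono') auto
  ultimately show ?thesis unfolding chan_eq_powr_discr[OF assms(1-3)] by simp
qed

lemma ml_decode_eq_SomeI:
  assumes "x \<in> C" and "\<And>x'. x' \<in> C \<Longrightarrow> x' \<noteq> x \<Longrightarrow> chan p q n y x' < chan p q n y x"
  shows "ml_decode p q n C y = Some x"
proof -
  let ?is_max = "\<lambda>z. z \<in> C \<and> (\<forall>x'\<in>C. chan p q n y x' \<le> chan p q n y z)"
  have "?is_max x" using assms by (auto intro: less_imp_le)
  moreover have "z = x" if "?is_max z" for z using that assms by (meson not_less)
  ultimately have "\<exists>!z. ?is_max z" and "(THE z. ?is_max z) = x" by (blast, rule the_equality)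
  then show ?thesis unfolding ml_decode_def by simp
qed

lemma Min_off_diagonal_le:
  fixes f :: "'a \<Rightarrow> 'a \<Rightarrow> 'b::linorder"
  assumes "finite C" "x \<in> C" "x' \<in> C" "x \<noteq> x'"
  shows "Min {f a b | a b. a \<in> C \<and> b \<in> C \<and> a \<noteq> b} \<le> f x x'"
proof (rule Min_le)
  have "{f a b | a b. a \<in> C \<and> b \<in> C \<and> a \<noteq> b} \<subseteq> (\<lambda>(a, b). f a b) ` (C \<times> C)"
    by auto
  then show "finite {f a b | a b. a \<in> C \<and> b \<in> C \<and> a \<noteq> b}"
    by (rule finite_subset) (use assms(1) in simp)
qed (use assms in auto)

lemma discr_less_of_min_discr_bound:
  assumes "gam p q \<ge> 0" "finite C" "x \<in> C" "x' \<in> C" "x' \<noteq> x"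
    and "discr p q n y x < (min_discr p q n C + (real (hw n y) - real (hw n x)) * (gam p q - 1)) / 2"
  shows "discr p q n y x < discr p q n y x'"
proof -
  have "min_discr p q n C \<le> discr p q n x x'"
    unfolding min_discr_def using assms(2-5) by (intro Min_off_diagonal_le) auto
  also have "\<dots> \<le> discr p q n x y + discr p q n y x'" by (rule discr_triangle[OF assms(1)])
  also have "\<dots> = discr p q n y x + discr p q n y x' - (real (hw n y) - real (hw n x)) * (gam p q - 1)"
    by (simp add: discr_commute[of p q n x y])
  finally show ?thesis using assms(6) by (simp add: field_simps)
qed

lemma discr_less_of_min_sdiscr_bound:
  assumes "gam p q \<ge> 0" "finite C" "x \<in> C" "x' \<in> C" "x' \<noteq> x"
    and "discr p q n y x < (min_sdiscr p q n C + real (hw n y) * (gam p q - 1)) / 2"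
  shows "discr p q n y x < discr p q n y x'"
proof -
  have "min_sdiscr p q n C \<le> sdiscr p q n x x'"
    unfolding min_sdiscr_def using assms(2-5) by (intro Min_off_diagonal_le) auto
  also have "\<dots> \<le> sdiscr p q n x y + sdiscr p q n y x' + real (hw n y) * (gam p q - 1)"
    by (rule sdiscr_triangle[OF assms(1)])
  also have "\<dots> = discr p q n y x + discr p q n y x' - real (hw n y) * (gam p q - 1)"
    by (subst sdiscr_commute) (simp add: sdiscr_def)
  finally show ?thesis using assms(6) by (simp add: field_simps)
qed

theorem mainTheorem7:
  fixes p q :: real and n :: nat and C :: "(nat \<Rightarrow> bool) set" and x y :: "nat \<Rightarrow> bool"
  assumes "n \<ge> 2" and "0 < p" and "p \<le> q" and "q < 1/2"
    and "is_code n C" and "x \<in> C" and "y \<in> words n"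
    and "discr p q n y x < (min_discr p q n C + (real (hw n y) - real (hw n x)) * (gam p q - 1)) / 2
         \<or> discr p q n y x < (min_sdiscr p q n C + real (hw n y) * (gam p q - 1)) / 2"
  shows "ml_decode p q n C y = Some x"
proof (rule ml_decode_eq_SomeI[OF \<open>x \<in> C\<close>])
  have "finite C"
    using \<open>is_code n C\<close> unfolding is_code_def by (metis card.infinite not_numeral_le_zero)
  have "gam p q \<ge> 0" using gam_pos[OF assms(2-4)] by simp
  fix x' assume "x' \<in> C" "x' \<noteq> x"
  note bound_facts = \<open>gam p q \<ge> 0\<close> \<open>finite C\<close> \<open>x \<in> C\<close> \<open>x' \<in> C\<close> \<open>x' \<noteq> x\<close>
  from assms(8) have "discr p q n y x < discr p q n y x'"
  proof
    assume "discr p q n y x < (min_discr p q n C + (real (hw n y) - real (hw n x)) * (gam p q - 1)) / 2"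
    with bound_facts show ?thesis by (rule discr_less_of_min_discr_bound)
  next
    assume "discr p q n y x < (min_sdiscr p q n C + real (hw n y) * (gam p q - 1)) / 2"
    with bound_facts show ?thesis by (rule discr_less_of_min_sdiscr_bound)
  qed
  with assms(2-4) show "chan p q n y x' < chan p q n y x" by (rule chan_less_of_discr_less)
qed

end
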